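(* Let $P\in\mathbb{P}^2$ be a point at which the conic $C_2$ is singular. Then: \begin{enumerate} \item If $P\in (C_2\cap L)\setminus L_\infty$, then $(D,P)$ is of type $e_6$. \item If $P\in (C_2\cap L_\infty)\setminus L$, then $D$ is smooth at $P$ and tangent to $L_\infty$ at $P$ with $I(D,L_\infty;P)=4$. \item If $P\in C_2\cap L\cap L_\infty$, then $D$ consists of four lines passing through $P$. \end{enumerate}
   Context: Work in $\mathbb{P}^2$ with homogeneous coordinates $[X:Y:Z]$, $L_\infty=\{Z=0\}$. Let $F_1'$ and $F_2'$ be homogeneous polynomials of degrees $1$ and $2$, let $L=\{F_1'=0\}$ be a line with $L\neq L_\infty$, and $C_2=\{F_2'=0\}$ a conic having neither $L$ nor $L_\infty$ as a component. Let $D=\{G=0\}$ be the quartic with $G=F_2'^2+F_1'^3Z$. "$(D,P)$ is of type $e_6$" means the germ of $D$ at $P$ is topologically equivalent to the germ $x^3+y^4=0$ at the origin; $I(\cdot,\cdot;P)$ is the local intersection multiplicity. *)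

theory Defs
  imports "HOL-Complex_Analysis.Complex_Analysis"
begin

text \<open>Homogeneous polynomials in X,Y,Z over the complex numbers are represented by the
polynomial functions they induce (over an infinite field this is a faithful
representation). Points of P^2 are represented by nonzero triples (p1,p2,p3);
all conditions below are invariant under rescaling.\<close>

type_synonym form3 = "complex \<Rightarrow> complex \<Rightarrow> complex \<Rightarrow> complex"

definition linear_form :: "form3 \<Rightarrow> bool" where
  "linear_form F \<longleftrightarrow> (\<exists>a b c. (a, b, c) \<noteq> (0, 0, 0) \<and>
      (\<forall>X Y Z. F X Y Z = a * X + b * Y + c * Z))"

definition quadratic_form :: "form3 \<Rightarrow> bool" where
  "quadratic_form F \<longleftrightarrow> F \<noteq> (\<lambda>_ _ _. 0) \<and>
     (\<exists>a b c d e f. \<forall>X Y Z. F X Y Z =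
        a * X^2 + b * Y^2 + c * Z^2 + d * X * Y + e * X * Z + f * Y * Z)"

text \<open>The line \<open>{F1 = 0}\<close> is a component of the curve \<open>{F = 0}\<close>: F1 divides F, the
cofactor being a linear form (F of degree 2).\<close>
definition line_component :: "form3 \<Rightarrow> form3 \<Rightarrow> bool" where
  "line_component F1 F \<longleftrightarrow> (\<exists>H. linear_form H \<and> (\<forall>X Y Z. F X Y Z = F1 X Y Z * H X Y Z))"

definition zero_grad :: "form3 \<Rightarrow> complex \<Rightarrow> complex \<Rightarrow> complex \<Rightarrow> bool" where
  "zero_grad F p1 p2 p3 \<longleftrightarrow>
     deriv (\<lambda>x. F x p2 p3) p1 = 0 \<and> deriv (\<lambda>y. F p1 y p3) p2 = 0 \<and> deriv (\<lambda>z. F p1 p2 z) p3 = 0"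

definition singular_at :: "form3 \<Rightarrow> complex \<Rightarrow> complex \<Rightarrow> complex \<Rightarrow> bool" where
  "singular_at F p1 p2 p3 \<longleftrightarrow> F p1 p2 p3 = 0 \<and> zero_grad F p1 p2 p3"

definition smooth_at :: "form3 \<Rightarrow> complex \<Rightarrow> complex \<Rightarrow> complex \<Rightarrow> bool" where
  "smooth_at F p1 p2 p3 \<longleftrightarrow> F p1 p2 p3 = 0 \<and> \<not> zero_grad F p1 p2 p3"

text \<open>The tangent line of \<open>{F=0}\<close> at a smooth point P is \<open>L_\<infinity> = {Z = 0}\<close>.\<close>
definition tangent_to_Linf :: "form3 \<Rightarrow> complex \<Rightarrow> complex \<Rightarrow> complex \<Rightarrow> bool" where
  "tangent_to_Linf F p1 p2 p3 \<longleftrightarrow>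
     deriv (\<lambda>x. F x p2 p3) p1 = 0 \<and> deriv (\<lambda>y. F p1 y p3) p2 = 0 \<and> deriv (\<lambda>z. F p1 p2 z) p3 \<noteq> 0"

text \<open>Local intersection multiplicity at P of the curve \<open>{F=0}\<close> with the line through
the distinct points P and Q (line not a component): the order of vanishing at t = 0
of \<open>t \<mapsto> F(P + t Q)\<close>.\<close>
definition line_int_mult ::
  "form3 \<Rightarrow> complex \<times> complex \<times> complex \<Rightarrow> complex \<times> complex \<times> complex \<Rightarrow> int" where
  "line_int_mult F P Q = (case P of (p1, p2, p3) \<Rightarrow> case Q of (q1, q2, q3) \<Rightarrow>
      zorder (\<lambda>t. F (p1 + t * q1) (p2 + t * q2) (p3 + t * q3)) 0)"

text \<open>Germ of the zero set of g at p is topologically equivalent to the germ of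
\<open>x^3 + y^4 = 0\<close> at the origin (in C^2).\<close>
definition e6_germ :: "(complex \<times> complex \<Rightarrow> complex) \<Rightarrow> complex \<times> complex \<Rightarrow> bool" where
  "e6_germ g p \<longleftrightarrow> (\<exists>U (V :: (complex \<times> complex) set) h k. open U \<and> open V \<and> p \<in> U \<and> (0, 0) \<in> V \<and>
      homeomorphism U V h k \<and> h p = (0, 0) \<and>
      h ` (U \<inter> {z. g z = 0}) = V \<inter> {(x, y). x ^ 3 + y ^ 4 = 0})"

text \<open>(D,P) of type e6 for \<open>P \<notin> L_\<infinity>\<close>, read in the affine chart Z = 1.\<close>
definition proj_e6 :: "form3 \<Rightarrow> complex \<Rightarrow> complex \<Rightarrow> complex \<Rightarrow> bool" where
  "proj_e6 G p1 p2 p3 \<longleftrightarrow> e6_germ (\<lambda>(x, y). G x y 1) (p1 / p3, p2 / p3)"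

end

theory Submission
  imports Defs "HOL-Computational_Algebra.Fundamental_Theorem_Algebra"
begin

text \<open>Since \<open>C\<^sub>2\<close> is singular at \<open>P\<close>, \<open>F\<^sub>2\<close> is a binary quadratic form in two linear forms
vanishing at \<open>P\<close>. At a finite point of \<open>L\<close> this gives, in affine coordinates centred at \<open>P\<close>,
\<open>F\<^sub>2 = Q(\<xi>, \<eta>)\<close> and \<open>F\<^sub>1 = \<ell>(\<xi>, \<eta>)\<close>; as \<open>L\<close> is not a component of \<open>C\<^sub>2\<close>, \<open>Q\<close> does not vanish
on the direction of \<open>\<ell>\<close>, so \<open>Q = v\<^sup>2 + d \<ell>\<^sup>2\<close> for a second coordinate \<open>v\<close>, and \<open>D\<close> becomes
\<open>u\<^sup>3 + (v\<^sup>2 + d u\<^sup>2)\<^sup>2\<close> with \<open>u = \<ell>\<close>. The holomorphic coordinate change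
\<open>x = u c + e v\<^sup>2\<close>, \<open>y = v (1 - 3 u c e\<^sup>2 - e\<^sup>3 v\<^sup>2)\<^bsup>1/4\<^esup>\<close> with \<open>c = (1 + d\<^sup>2 u)\<^bsup>1/3\<^esup>\<close> and
\<open>e = 2d / 3c\<^sup>2\<close> has identity Jacobian at the origin and turns this into \<open>x\<^sup>3 + y\<^sup>4\<close>.

At a point at infinity, \<open>F\<^sub>2 = k\<^sub>1 u\<^sup>2 + k\<^sub>2 u Z + k\<^sub>3 Z\<^sup>2\<close> with \<open>u = p\<^sub>2 X - p\<^sub>1 Y\<close>, and \<open>k\<^sub>1 \<noteq> 0\<close>
because \<open>L\<^sub>\<infinity>\<close> is not a component. On \<open>Z = 0\<close> the quartic is \<open>k\<^sub>1\<^sup>2 u\<^sup>4\<close>, which gives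
tangency and multiplicity 4; if moreover \<open>P \<in> L\<close>, then \<open>F\<^sub>1\<close> is a combination of \<open>u\<close> and
\<open>Z\<close>, so \<open>G\<close> is a binary quartic in \<open>u, Z\<close> and splits into four lines through \<open>P\<close>.\<close>

section \<open>Binary and ternary forms\<close>

lemma linear_relation_multiple:
  fixes a b p1 p2 :: complex
  assumes "a * p1 + b * p2 = 0" "(p1, p2) \<noteq> (0, 0)"
  obtains k where "a = k * p2" "b = - k * p1"
proof (cases "p1 = 0")
  case True
  with assms have "p2 \<noteq> 0" "b = 0" by auto
  then show ?thesis using that[of "a / p2"] True by simp
next
  case False
  with assms(1) have "a = (- b / p1) * p2" by (simp add: field_simps add_eq_0_iff)
  then show ?thesis using that[of "- b / p1"] False by simp
qed

lemma zero_grad_quadratic_iff: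
  fixes F :: form3
  assumes F: "\<And>X Y Z. F X Y Z = A*X^2 + B*Y^2 + C*Z^2 + D*X*Y + E*X*Z + Fc*Y*Z"
  shows "zero_grad F p1 p2 p3 \<longleftrightarrow>
    2*A*p1 + D*p2 + E*p3 = 0 \<and> 2*B*p2 + D*p1 + Fc*p3 = 0 \<and> 2*C*p3 + E*p1 + Fc*p2 = 0"
proof -
  have "((\<lambda>x. F x p2 p3) has_field_derivative 2*A*p1 + D*p2 + E*p3) (at p1)"
    "((\<lambda>y. F p1 y p3) has_field_derivative 2*B*p2 + D*p1 + Fc*p3) (at p2)"
    "((\<lambda>z. F p1 p2 z) has_field_derivative 2*C*p3 + E*p1 + Fc*p2) (at p3)"
    unfolding F by (auto intro!: derivative_eq_intros simp: algebra_simps)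
  then show ?thesis
    unfolding zero_grad_def by (simp add: DERIV_imp_deriv)
qed

lemma singular_quadric_affine_cone:
  fixes F :: form3
  assumes F: "\<And>X Y Z. F X Y Z = A*X^2 + B*Y^2 + C*Z^2 + D*X*Y + E*X*Z + Fc*Y*Z"
    and grad: "2*A*p1 + D*p2 + E*p3 = 0" "2*B*p2 + D*p1 + Fc*p3 = 0" "2*C*p3 + E*p1 + Fc*p2 = 0"
    and p3: "p3 \<noteq> 0"
  shows "F X Y Z = A * (X - p1/p3*Z)^2 + D * (X - p1/p3*Z) * (Y - p2/p3*Z) + B * (Y - p2/p3*Z)^2"
proof -
  define a0 b0 where "a0 = p1/p3" and "b0 = p2/p3"
  have p: "p1 = a0 * p3" "p2 = b0 * p3" using p3 by (simp_all add: a0_def b0_def)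
  have "p3 * (E + (2*A*a0 + D*b0)) = 0" "p3 * (Fc + (2*B*b0 + D*a0)) = 0"
    using grad(1,2) unfolding p by (simp_all add: algebra_simps)
  then have E: "E = - (2*A*a0 + D*b0)" and Fc: "Fc = - (2*B*b0 + D*a0)"
    using p3 by (metis add_eq_0_iff2 mult_eq_0_iff)+
  have "p3 * (2*C + E*a0 + Fc*b0) = 0"
    using grad(3) unfolding p by (simp add: algebra_simps)
  then have "2*C + E*a0 + Fc*b0 = 0" using p3 by simp
  then have "2*C = 2*(A*a0^2 + D*a0*b0 + B*b0^2)" unfolding E Fc by algebra
  then have C: "C = A*a0^2 + D*a0*b0 + B*b0^2" by (metis mult_cancel_left zero_neq_numeral)
  show ?thesis unfolding a0_def[symmetric] b0_def[symmetric]
    by (simp add: F C E Fc power2_eq_square algebra_simps)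
qed

lemma singular_quadric_cone_at_infinity:
  fixes F :: form3
  assumes F: "\<And>X Y Z. F X Y Z = A*X^2 + B*Y^2 + C*Z^2 + D*X*Y + E*X*Z + Fc*Y*Z"
    and grad: "2*A*p1 + D*p2 = 0" "D*p1 + 2*B*p2 = 0" "E*p1 + Fc*p2 = 0"
    and P: "(p1, p2) \<noteq> (0, 0)"
  obtains k1 k2 where "\<And>X Y Z. F X Y Z = k1 * (p2*X - p1*Y)^2 + k2 * (p2*X - p1*Y) * Z + C * Z^2"
proof -
  obtain m where m: "2*A = m * p2" "D = - m * p1"
    using linear_relation_multiple[OF grad(1) P] .
  obtain m' where m': "D = m' * p2" "2*B = - m' * p1"
    using linear_relation_multiple[OF grad(2) P] .
  have "m * p1 + m' * p2 = 0" using m(2) m'(1) by simp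
  then obtain n where n: "m = n * p2" "m' = - n * p1"
    using linear_relation_multiple P by blast
  obtain k2 where k2: "E = k2 * p2" "Fc = - k2 * p1"
    using linear_relation_multiple[OF grad(3) P] .
  have coeffs: "A = n/2 * p2^2" "B = n/2 * p1^2" "D = - n * p1 * p2"
    using m m' n by (simp_all add: power2_eq_square field_simps)
  have "F X Y Z = n/2 * (p2*X - p1*Y)^2 + k2 * (p2*X - p1*Y) * Z + C * Z^2" for X Y Z
    unfolding F k2 coeffs by (simp add: power2_eq_square algebra_simps)
  then show ?thesis by (rule that)
qed

lemma binary_quadratic_factor_of_zero:
  fixes A B D \<alpha> \<beta> :: complex
  assumes ab: "(\<alpha>, \<beta>) \<noteq> (0, 0)" and Q: "A*\<beta>^2 - D*\<alpha>*\<beta> + B*\<alpha>^2 = 0"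
  obtains \<sigma> \<tau> where "\<And>\<xi> \<eta>. A*\<xi>^2 + D*\<xi>*\<eta> + B*\<eta>^2 = (\<alpha>*\<xi> + \<beta>*\<eta>) * (\<sigma>*\<xi> + \<tau>*\<eta>)"
proof (cases "\<alpha> = 0")
  case True
  with ab Q have "\<beta> \<noteq> 0" "A = 0" by auto
  then show ?thesis
    using that[of "D/\<beta>" "B/\<beta>"] True by (simp add: field_simps power2_eq_square)
next
  case False
  then have B: "B = (D*\<alpha>*\<beta> - A*\<beta>^2) / \<alpha>^2" using Q by (simp add: field_simps)
  show ?thesis
    using that[of "A/\<alpha>" "(D - \<beta>*A/\<alpha>)/\<alpha>"] False by (simp add: B field_simps power2_eq_square)
qed

lemma binary_quadratic_complete_square:
  fixes r b c x y :: complex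
  assumes "r \<noteq> 0"
  shows "r^2*x^2 + b*x*y + c*y^2 = (r*x + b/(2*r)*y)^2 + (c - b^2/(4*r^2))*y^2"
proof -
  have "(r*x + b/(2*r)*y)^2 = r^2*x^2 + b*x*y + b^2/(4*r^2)*y^2"
    using assms by (simp add: power2_eq_square field_simps)
  then show ?thesis by (simp add: algebra_simps)
qed

lemma binary_quadratic_split_off_line:
  fixes A B D \<alpha> \<beta> :: complex
  assumes ab: "(\<alpha>, \<beta>) \<noteq> (0, 0)" and Q: "A*\<beta>^2 - D*\<alpha>*\<beta> + B*\<alpha>^2 \<noteq> 0"
  obtains \<sigma> \<tau> d where "\<And>\<xi> \<eta>. A*\<xi>^2 + D*\<xi>*\<eta> + B*\<eta>^2 = (\<sigma>*\<xi> + \<tau>*\<eta>)^2 + d*(\<alpha>*\<xi> + \<beta>*\<eta>)^2"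
    and "\<alpha>*\<tau> - \<beta>*\<sigma> \<noteq> 0"
proof (cases "\<alpha> = 0")
  case True
  with ab Q have "\<beta> \<noteq> 0" "A \<noteq> 0" by auto
  define r b c where "r = csqrt A" and "b = D/\<beta>" and "c = B/\<beta>^2"
  have "r \<noteq> 0" "r^2 = A" using \<open>A \<noteq> 0\<close> by (simp_all add: r_def)
  have "A*\<xi>^2 + D*\<xi>*\<eta> + B*\<eta>^2 = r^2*\<xi>^2 + b*\<xi>*(\<beta>*\<eta>) + c*(\<beta>*\<eta>)^2" for \<xi> \<eta>
    using \<open>\<beta> \<noteq> 0\<close> \<open>r^2 = A\<close> by (simp add: b_def c_def field_simps power2_eq_square)
  also have "\<dots> \<xi> \<eta> = (r*\<xi> + (b/(2*r)*\<beta>)*\<eta>)^2 + (c - b^2/(4*r^2))*(\<alpha>*\<xi> + \<beta>*\<eta>)^2" for \<xi> \<eta>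
    using binary_quadratic_complete_square[OF \<open>r \<noteq> 0\<close>, where x = \<xi> and y = "\<beta>*\<eta>"] True
    by (simp add: mult.assoc)
  finally have "A*\<xi>^2 + D*\<xi>*\<eta> + B*\<eta>^2
      = (r*\<xi> + (b/(2*r)*\<beta>)*\<eta>)^2 + (c - b^2/(4*r^2))*(\<alpha>*\<xi> + \<beta>*\<eta>)^2" for \<xi> \<eta> .
  moreover have "\<alpha>*(b/(2*r)*\<beta>) - \<beta>*r \<noteq> 0" using True \<open>\<beta> \<noteq> 0\<close> \<open>r \<noteq> 0\<close> by simp
  ultimately show ?thesis by (rule that)
next
  case False
  define r b c where "r = csqrt ((A*\<beta>^2 - D*\<alpha>*\<beta> + B*\<alpha>^2) / \<alpha>^2)"
    and "b = D/\<alpha> - 2*A*\<beta>/\<alpha>^2" and "c = A/\<alpha>^2"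
  have "r \<noteq> 0" "r^2 = (A*\<beta>^2 - D*\<alpha>*\<beta> + B*\<alpha>^2) / \<alpha>^2" using Q False by (simp_all add: r_def)
  have "A*\<xi>^2 + D*\<xi>*\<eta> + B*\<eta>^2 = (A*\<beta>^2 - D*\<alpha>*\<beta> + B*\<alpha>^2) / \<alpha>^2 * \<eta>^2
      + b*\<eta>*(\<alpha>*\<xi> + \<beta>*\<eta>) + c*(\<alpha>*\<xi> + \<beta>*\<eta>)^2" for \<xi> \<eta>
    using False by (simp add: b_def c_def field_simps power2_eq_square)
  also have "\<dots> \<xi> \<eta> = r^2*\<eta>^2 + b*\<eta>*(\<alpha>*\<xi> + \<beta>*\<eta>) + c*(\<alpha>*\<xi> + \<beta>*\<eta>)^2" for \<xi> \<eta>
    using \<open>r^2 = _\<close> by simp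
  also have "\<dots> \<xi> \<eta> = (r*\<eta> + b/(2*r)*(\<alpha>*\<xi> + \<beta>*\<eta>))^2 + (c - b^2/(4*r^2))*(\<alpha>*\<xi> + \<beta>*\<eta>)^2" for \<xi> \<eta>
    by (rule binary_quadratic_complete_square[OF \<open>r \<noteq> 0\<close>])
  also have "\<dots> \<xi> \<eta> = ((b/(2*r)*\<alpha>)*\<xi> + (r + b/(2*r)*\<beta>)*\<eta>)^2 + (c - b^2/(4*r^2))*(\<alpha>*\<xi> + \<beta>*\<eta>)^2" for \<xi> \<eta>
    by (simp add: algebra_simps add_divide_distrib)
  finally have "A*\<xi>^2 + D*\<xi>*\<eta> + B*\<eta>^2 = ((b/(2*r)*\<alpha>)*\<xi> + (r + b/(2*r)*\<beta>)*\<eta>)^2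
      + (c - b^2/(4*r^2))*(\<alpha>*\<xi> + \<beta>*\<eta>)^2" for \<xi> \<eta> .
  moreover have "\<alpha>*(r + b/(2*r)*\<beta>) - \<beta>*(b/(2*r)*\<alpha>) \<noteq> 0"
    using False \<open>r \<noteq> 0\<close> by (simp add: algebra_simps)
  ultimately show ?thesis by (rule that)
qed

lemma binary_quartic_factor:
  fixes a b c d e :: complex
  assumes "a \<noteq> 0"
  obtains r1 r2 r3 r4 where "\<And>u v. a*u^4 + b*u^3 * v + c*u^2 * v^2 + d*u * v^3 + e * v^4
      = a * (u - r1 * v) * (u - r2 * v) * (u - r3 * v) * (u - r4 * v)"
proof -
  define p where "p = [:e, d, c, b, a:]"
  have "degree p = 4" "lead_coeff p = a" using assms by (simp_all add: p_def)
  then obtain root :: "nat \<Rightarrow> complex" where decomp: "smult a (\<Prod>i<4. [:- root i, 1:]) = p"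
    using complex_poly_decompose'[of p] by metis
  have roots: "e + z*(d + z*(c + z*(b + z*a)))
      = a * (z - root 0) * (z - root 1) * (z - root 2) * (z - root 3)" for z
  proof -
    have "poly p z = a * (\<Prod>i<4. z - root i)"
      by (simp add: decomp[symmetric] poly_prod)
    then show ?thesis
      by (simp add: p_def eval_nat_numeral lessThan_Suc mult_ac)
  qed
  have "a*u^4 + b*u^3 * v + c*u^2 * v^2 + d*u * v^3 + e * v^4
      = a * (u - root 0 * v) * (u - root 1 * v) * (u - root 2 * v) * (u - root 3 * v)" for u v
  proof (cases "v = 0")
    case False
    have "a*u^4 + b*u^3 * v + c*u^2 * v^2 + d*u * v^3 + e * v^4
        = v^4 * (e + (u/v)*(d + (u/v)*(c + (u/v)*(b + (u/v)*a))))"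
      using False by (simp add: field_simps power2_eq_square power3_eq_cube power4_eq_xxxx)
    also have "\<dots> = a * (u - root 0 * v) * (u - root 1 * v) * (u - root 2 * v) * (u - root 3 * v)"
      unfolding roots using False by (simp add: field_simps power4_eq_xxxx)
    finally show ?thesis .
  qed (simp add: power4_eq_xxxx)
  then show ?thesis by (rule that)
qed

lemma inj_affine_map_complex2:
  fixes \<alpha> \<beta> \<sigma> \<tau> :: complex
  assumes det: "\<alpha>*\<tau> - \<beta>*\<sigma> \<noteq> 0"
  shows "inj (\<lambda>z. (\<alpha>*(fst z - a0) + \<beta>*(snd z - b0), \<sigma>*(fst z - a0) + \<tau>*(snd z - b0)))"
proof (rule injI)
  fix z w :: "complex \<times> complex"
  assume "(\<alpha>*(fst z - a0) + \<beta>*(snd z - b0), \<sigma>*(fst z - a0) + \<tau>*(snd z - b0))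
        = (\<alpha>*(fst w - a0) + \<beta>*(snd w - b0), \<sigma>*(fst w - a0) + \<tau>*(snd w - b0))"
  then have "\<alpha>*(fst z - fst w) + \<beta>*(snd z - snd w) = 0" "\<sigma>*(fst z - fst w) + \<tau>*(snd z - snd w) = 0"
    by (simp_all add: algebra_simps)
  then have "(\<alpha>*\<tau> - \<beta>*\<sigma>) * (fst z - fst w) = 0" "(\<alpha>*\<tau> - \<beta>*\<sigma>) * (snd z - snd w) = 0"
    by (simp_all add: algebra_simps) algebra+
  then show "z = w" using det by (simp add: prod_eq_iff)
qed

section \<open>Principal roots and local inversion\<close>

definition croot :: "nat \<Rightarrow> complex \<Rightarrow> complex" where
  "croot n z = exp (Ln z / of_nat n)"

lemma croot_power: "z \<noteq> 0 \<Longrightarrow> n > 0 \<Longrightarrow> croot n z ^ n = z"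
  unfolding croot_def by (simp add: exp_of_nat_mult[symmetric])

lemma croot_nonzero [simp]: "croot n z \<noteq> 0"
  by (simp add: croot_def)

lemma croot_1 [simp]: "croot n 1 = 1"
  by (simp add: croot_def)

lemma has_field_derivative_croot:
  assumes "z \<notin> \<real>\<^sub>\<le>\<^sub>0" "n > 0"
  shows "(croot n has_field_derivative croot n z / (of_nat n * z)) (at z)"
proof -
  have "((\<lambda>z. Ln z / of_nat n) has_field_derivative inverse z / of_nat n) (at z)"
    using assms by (auto intro!: derivative_eq_intros)
  from DERIV_fun_exp[OF this] show ?thesis
    using assms by (simp add: croot_def[abs_def] field_simps)
qed

lemma continuous_on_croot [continuous_intros]:
  "continuous_on S f \<Longrightarrow> (\<And>z. z \<in> S \<Longrightarrow> f z \<notin> \<real>\<^sub>\<le>\<^sub>0) \<Longrightarrow> continuous_on S (\<lambda>z. croot n (f z))"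
  unfolding croot_def divide_inverse by (intro continuous_intros) auto

lemma holomorphic_on_croot [holomorphic_intros]:
  "f holomorphic_on S \<Longrightarrow> (\<And>z. z \<in> S \<Longrightarrow> f z \<notin> \<real>\<^sub>\<le>\<^sub>0) \<Longrightarrow> (\<lambda>z. croot n (f z)) holomorphic_on S"
  unfolding croot_def divide_inverse by (intro holomorphic_intros) auto

lemma has_derivative_field_compose:
  assumes "(f has_field_derivative f') (at (g x))" "(g has_derivative g') (at x within S)"
  shows "((\<lambda>x. f (g x)) has_derivative (\<lambda>h. f' * g' h)) (at x within S)"
  using has_derivative_compose[OF assms(2) assms(1)[unfolded has_field_derivative_def]] by simp

lemma local_homeomorphism_of_jacobian:
  fixes f :: "complex \<times> complex \<Rightarrow> complex \<times> complex"
  assumes S: "open S" "z0 \<in> S"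
    and der: "\<And>z. z \<in> S \<Longrightarrow>
      (f has_derivative (\<lambda>h. (fst h * a z + snd h * b z, fst h * c z + snd h * e z))) (at z)"
    and cont: "continuous_on S a" "continuous_on S b" "continuous_on S c" "continuous_on S e"
    and id: "a z0 = 1" "b z0 = 0" "c z0 = 0" "e z0 = 1"
  obtains U V g where "open U" "U \<subseteq> S" "z0 \<in> U" "open V" "homeomorphism U V f g"
proof -
  define J where "J z = Blinfun (\<lambda>h. (fst h * a z + snd h * b z, fst h * c z + snd h * e z))" for z
  have J: "blinfun_apply (J z) = (\<lambda>h. (fst h * a z + snd h * b z, fst h * c z + snd h * e z))" for z
    unfolding J_def by (intro bounded_linear_Blinfun_apply bounded_linear_intros)
  have "(f has_derivative blinfun_apply (J z)) (at z)" if "z \<in> S" for z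
    using der[OF that] by (simp add: J)
  moreover have "continuous_on S J"
    by (rule continuous_on_blinfun_componentwise) (use cont in \<open>auto simp: J intro!: continuous_intros\<close>)
  moreover have "id_blinfun o\<^sub>L J z0 = id_blinfun"
    by (rule blinfun_eqI) (simp add: J id)
  ultimately obtain U V g g' where "open U" "U \<subseteq> S" "z0 \<in> U" "open V" "homeomorphism U V f g"
    using inverse_function_theorem[OF S(1) _ _ S(2), of f J id_blinfun] by metis
  then show ?thesis by (rule that)
qed

lemma has_derivative_root_shear:
  fixes p q r s :: "complex \<Rightarrow> complex"
  defines "M \<equiv> \<lambda>z. 1 - r (fst z) - s (fst z) * snd z ^ 2"
  assumes dp: "((\<lambda>z. p (fst z)) has_derivative (\<lambda>h. p' * fst h)) (at z)"
    and dq: "((\<lambda>z. q (fst z)) has_derivative (\<lambda>h. q' * fst h)) (at z)"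
    and dr: "((\<lambda>z. r (fst z)) has_derivative (\<lambda>h. r' * fst h)) (at z)"
    and ds: "((\<lambda>z. s (fst z)) has_derivative (\<lambda>h. s' * fst h)) (at z)"
    and Mz: "M z \<notin> \<real>\<^sub>\<le>\<^sub>0"
    and R: "R = croot 4 (M z) / (4 * M z)"
  shows "((\<lambda>z. (p (fst z) + q (fst z) * snd z ^ 2, snd z * croot 4 (M z))) has_derivative (\<lambda>h.
      (fst h * (p' + q' * snd z ^ 2) + snd h * (2 * q (fst z) * snd z),
       fst h * (snd z * R * - (r' + s' * snd z ^ 2))
     + snd h * (croot 4 (M z) + snd z * R * - (2 * s (fst z) * snd z))))) (at z)"
proof -
  have dM: "(M has_derivative (\<lambda>h. fst h * - (r' + s' * snd z ^ 2) + snd h * - (2 * s (fst z) * snd z))) (at z)"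
    unfolding M_def
    by (rule has_derivative_eq_rhs, (rule derivative_eq_intros dr ds refl)+) (simp add: fun_eq_iff algebra_simps)
  have dC: "((\<lambda>z. croot 4 (M z)) has_derivative
      (\<lambda>h. R * (fst h * - (r' + s' * snd z ^ 2) + snd h * - (2 * s (fst z) * snd z)))) (at z)"
    by (rule has_derivative_eq_rhs[OF has_derivative_field_compose[OF has_field_derivative_croot[where n = 4, OF Mz] dM]])
      (simp_all add: R fun_eq_iff)
  have dY: "((\<lambda>z. snd z * croot 4 (M z)) has_derivative
      (\<lambda>h. fst h * (snd z * R * - (r' + s' * snd z ^ 2))
         + snd h * (croot 4 (M z) + snd z * R * - (2 * s (fst z) * snd z)))) (at z)"
    by (rule has_derivative_eq_rhs[OF has_derivative_mult[OF has_derivative_snd[OF has_derivative_ident] dC]])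
      (simp add: fun_eq_iff algebra_simps)
  have dX: "((\<lambda>z. p (fst z) + q (fst z) * snd z ^ 2) has_derivative
      (\<lambda>h. fst h * (p' + q' * snd z ^ 2) + snd h * (2 * q (fst z) * snd z))) (at z)"
    by (rule has_derivative_eq_rhs, (rule derivative_eq_intros dp dq refl)+) (simp add: fun_eq_iff algebra_simps)
  show ?thesis by (rule has_derivative_Pair[OF dX dY])
qed

lemma has_derivative_holomorphic_fst:
  assumes "f holomorphic_on B" "open B" "fst z \<in> B"
  shows "((\<lambda>z. f (fst z)) has_derivative (\<lambda>h. deriv f (fst z) * fst h)) (at z)"
  using assms holomorphic_derivI
  by (blast intro: has_derivative_field_compose has_derivative_fst[OF has_derivative_ident])

lemma continuous_on_holomorphic_fst:
  assumes "f holomorphic_on B" "open B"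
  shows "continuous_on (B \<times> UNIV) (\<lambda>z. f (fst z))" "continuous_on (B \<times> UNIV) (\<lambda>z. deriv f (fst z))"
  using assms by (auto intro!: continuous_on_compose2[OF _ continuous_on_fst]
      holomorphic_on_imp_continuous_on holomorphic_deriv)

lemma local_homeomorphism_root_shear:
  fixes p q r s :: "complex \<Rightarrow> complex"
  defines "M \<equiv> \<lambda>z. 1 - r (fst z) - s (fst z) * snd z ^ 2"
  assumes B: "open B" "0 \<in> B"
    and hol: "p holomorphic_on B" "q holomorphic_on B" "r holomorphic_on B" "s holomorphic_on B"
    and p: "p 0 = 0" "deriv p 0 = 1" and r: "r 0 = 0"
  obtains U V g where "open U" "(0, 0) \<in> U" "open V"
    "homeomorphism U V (\<lambda>z. (p (fst z) + q (fst z) * snd z ^ 2, snd z * croot 4 (M z))) g"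
    "\<And>z. z \<in> U \<Longrightarrow> fst z \<in> B \<and> M z \<noteq> 0"
proof -
  define S where "S = (B \<times> UNIV) \<inter> M -` {w. 0 < Re w}"
  note cont_fst = continuous_on_holomorphic_fst[OF _ B(1)]
  have "open S" unfolding S_def M_def
    using cont_fst(1)[OF hol(3)] cont_fst(1)[OF hol(4)] B(1)
    by (intro continuous_open_preimage open_halfspace_Re_gt open_Times continuous_intros) auto
  have "(0, 0) \<in> S" using B(2) r by (simp add: S_def M_def)
  have M_nonpos: "M z \<notin> \<real>\<^sub>\<le>\<^sub>0" if "z \<in> S" for z
    using that by (auto simp: S_def complex_nonpos_Reals_iff)
  define R where "R z = croot 4 (M z) / (4 * M z)" for z
  have der: "((\<lambda>z. (p (fst z) + q (fst z) * snd z ^ 2, snd z * croot 4 (M z))) has_derivative (\<lambda>h.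
      (fst h * (deriv p (fst z) + deriv q (fst z) * snd z ^ 2) + snd h * (2 * q (fst z) * snd z),
       fst h * (snd z * R z * - (deriv r (fst z) + deriv s (fst z) * snd z ^ 2))
     + snd h * (croot 4 (M z) + snd z * R z * - (2 * s (fst z) * snd z))))) (at z)"
    if "z \<in> S" for z
  proof -
    have "fst z \<in> B" using that by (simp add: S_def mem_Times_iff)
    note d = has_derivative_holomorphic_fst[OF _ B(1) this]
    from has_derivative_root_shear[OF d[OF hol(1)] d[OF hol(2)] d[OF hol(3)] d[OF hol(4)]]
    show ?thesis using M_nonpos[OF that] by (simp add: M_def R_def)
  qed
  have "S \<subseteq> B \<times> UNIV" by (auto simp: S_def)
  note cont_S = cont_fst[THEN continuous_on_subset, OF _ this]
  note cont = cont_S[OF hol(1)] cont_S[OF hol(2)] cont_S[OF hol(3)] cont_S[OF hol(4)]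
  have M_nonzero: "M z \<noteq> 0" if "z \<in> S" for z
    using that by (auto simp: S_def)
  have "continuous_on S M"
    unfolding M_def using cont by (intro continuous_intros)
  then have cont_root: "continuous_on S (\<lambda>z. croot 4 (M z))" "continuous_on S R"
    unfolding R_def using M_nonpos M_nonzero by (auto intro!: continuous_intros)
  obtain U V g where "open U" "U \<subseteq> S" "(0, 0) \<in> U" "open V"
    "homeomorphism U V (\<lambda>z. (p (fst z) + q (fst z) * snd z ^ 2, snd z * croot 4 (M z))) g"
    by (rule local_homeomorphism_of_jacobian[OF \<open>open S\<close> \<open>(0, 0) \<in> S\<close> der])
      (use cont cont_root p r in \<open>auto simp: M_def intro!: continuous_intros\<close>)
  moreover have "fst z \<in> B" if "z \<in> S" for z
    using that by (auto simp: S_def)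
  ultimately show ?thesis using that M_nonzero by blast
qed

section \<open>Germs of type \<open>E\<^sub>6\<close>\<close>

lemma root_shear_cube_plus_quartic:
  fixes d u v :: complex
  defines "c \<equiv> croot 3 (1 + d^2 * u)"
  defines "e \<equiv> 2 * d / (3 * c^2)"
  assumes "1 + d^2 * u \<noteq> 0" "1 - 3 * u * c * e^2 - e^3 * v^2 \<noteq> 0"
  shows "(u * c + e * v^2) ^ 3 + (v * croot 4 (1 - 3 * u * c * e^2 - e^3 * v^2)) ^ 4
    = u^3 + (v^2 + d * u^2)^2"
proof -
  have c3: "c ^ 3 = 1 + d^2 * u" using assms(3) by (simp add: c_def croot_power)
  have "3 * u^2 * c^2 * e = 2 * d * u^2" by (simp add: e_def c_def field_simps)
  then have "(u * c + e * v^2) ^ 3 + v^4 * (1 - 3 * u * c * e^2 - e^3 * v^2)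
      = u^3 * c^3 + 2 * d * u^2 * v^2 + v^4"
    by algebra
  also have "\<dots> = u^3 + (v^2 + d * u^2)^2"
    unfolding c3 by algebra
  finally show ?thesis
    using assms(4) by (simp add: power_mult_distrib croot_power)
qed

lemma e6_germI:
  fixes h :: "complex \<times> complex \<Rightarrow> complex \<times> complex" and g :: "complex \<times> complex \<Rightarrow> complex"
  assumes "open U" "p \<in> U" "continuous_on U h" "inj_on h U" "h p = (0, 0)"
    and zeros: "\<And>z. z \<in> U \<Longrightarrow> g z = 0 \<longleftrightarrow> fst (h z) ^ 3 + snd (h z) ^ 4 = 0"
  shows "e6_germ g p"
proof -
  have "h ` (U \<inter> {z. g z = 0}) = h ` U \<inter> {w. fst w ^ 3 + snd w ^ 4 = 0}"
    using zeros by auto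
  also have "{w. fst w ^ 3 + snd w ^ 4 = 0} = {(x, y). x ^ 3 + y ^ 4 = (0::complex)}"
    by auto
  finally have img: "h ` (U \<inter> {z. g z = 0}) = h ` U \<inter> {(x, y). x ^ 3 + y ^ 4 = 0}" .
  obtain k where "homeomorphism U (h ` U) h k"
    using invariance_of_domain_homeomorphism[OF assms(1,3) order_refl assms(4)] by blast
  moreover have "open (h ` U)"
    using invariance_of_domain[OF assms(3,1,4)] .
  ultimately show ?thesis
    unfolding e6_germ_def using assms(1,2,5) img
    by (intro exI[of _ U] exI[of _ "h ` U"] exI[of _ h] exI[of _ k]) (auto simp flip: assms(5))
qed

lemma e6_germ_compose_injective:
  fixes g :: "complex \<times> complex \<Rightarrow> complex"
  assumes "e6_germ g (0, 0)" "continuous_on UNIV T" "inj T" "T p = (0, 0)"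
  shows "e6_germ (\<lambda>z. g (T z)) p"
proof -
  obtain U V k and h :: "complex \<times> complex \<Rightarrow> complex \<times> complex"
    where U: "open U" "(0, 0) \<in> U" and hom: "homeomorphism U V h k"
    and h0: "h (0, 0) = (0, 0)" and img: "h ` (U \<inter> {z. g z = 0}) = V \<inter> {(x, y). x ^ 3 + y ^ 4 = 0}"
    using assms(1) unfolding e6_germ_def by blast
  have "continuous_on U h" and hU: "h ` U = V"
    using hom by (simp_all add: homeomorphism_def)
  have inj: "inj_on h U"
    using homeomorphism_apply1[OF hom] by (rule inj_on_inverseI)
  have zeros: "g z = 0 \<longleftrightarrow> fst (h z) ^ 3 + snd (h z) ^ 4 = 0" if "z \<in> U" for z
  proof -
    have "g z = 0 \<longleftrightarrow> h z \<in> h ` (U \<inter> {z. g z = 0})"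
      using inj_on_image_mem_iff[OF inj that, of "U \<inter> {z. g z = 0}"] that by blast
    also have "\<dots> \<longleftrightarrow> fst (h z) ^ 3 + snd (h z) ^ 4 = 0"
      using that hU by (auto simp: img case_prod_beta)
    finally show ?thesis .
  qed
  show ?thesis
  proof (rule e6_germI)
    show "open (T -` U)" using U(1) assms(2) by (rule open_vimage)
    show "continuous_on (T -` U) (\<lambda>z. h (T z))"
      using continuous_on_subset[OF assms(2)] \<open>continuous_on U h\<close>
      by (intro continuous_on_compose2[where f = T and g = h and t = U]) auto
    show "inj_on (\<lambda>z. h (T z)) (T -` U)"
    proof (rule inj_onI)
      fix x y assume "x \<in> T -` U" "y \<in> T -` U" "h (T x) = h (T y)"
      then have "T x = T y" using inj by (auto dest: inj_onD)
      with assms(3) show "x = y" by (rule injD)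
    qed
    show "p \<in> T -` U" "h (T p) = (0, 0)"
      using assms(4) U(2) h0 by simp_all
    show "g (T z) = 0 \<longleftrightarrow> fst (h (T z)) ^ 3 + snd (h (T z)) ^ 4 = 0" if "z \<in> T -` U" for z
      using zeros that by simp
  qed
qed

lemma e6_germ_normal_form: "e6_germ (\<lambda>(u, v). u^3 + (v^2 + d * u^2)^2) (0, 0)"
proof -
  define B where "B = {u. 0 < Re (1 + d^2 * u)}"
  define c where "c u = croot 3 (1 + d^2 * u)" for u
  define e where "e u = 2 * d / (3 * c u ^ 2)" for u
  have B: "open B" "0 \<in> B"
    unfolding B_def by (intro open_Collect_less continuous_intros) simp
  have B_nonpos: "1 + d^2 * u \<notin> \<real>\<^sub>\<le>\<^sub>0" if "u \<in> B" for u
    using that by (auto simp: B_def complex_nonpos_Reals_iff)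
  have c: "c holomorphic_on B"
    unfolding c_def[abs_def] using B_nonpos by (intro holomorphic_intros)
  have e: "e holomorphic_on B"
    unfolding e_def[abs_def] by (intro holomorphic_intros c) (simp add: c_def)
  have hol: "(\<lambda>u. u * c u) holomorphic_on B" "(\<lambda>u. 3 * u * c u * e u ^ 2) holomorphic_on B"
      "(\<lambda>u. e u ^ 3) holomorphic_on B"
    by (intro holomorphic_intros c e)+
  have "c field_differentiable at 0"
    using holomorphic_on_imp_differentiable_at[OF c B] .
  then have "deriv (\<lambda>u. u * c u) 0 = 0 * deriv c 0 + deriv (\<lambda>u. u) 0 * c 0"
    by (intro deriv_mult field_differentiable_ident)
  then have deriv_p: "deriv (\<lambda>u. u * c u) 0 = 1"
    by (simp add: c_def)
  obtain U V g where U: "open U" "(0, 0) \<in> U"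
    and hom: "homeomorphism U V (\<lambda>z. (fst z * c (fst z) + e (fst z) * snd z ^ 2,
        snd z * croot 4 (1 - 3 * fst z * c (fst z) * e (fst z) ^ 2 - e (fst z) ^ 3 * snd z ^ 2))) g"
        (is "homeomorphism _ _ ?\<Psi> _")
    and U_sub: "\<And>z. z \<in> U \<Longrightarrow>
        fst z \<in> B \<and> 1 - 3 * fst z * c (fst z) * e (fst z) ^ 2 - e (fst z) ^ 3 * snd z ^ 2 \<noteq> 0"
    by (rule local_homeomorphism_root_shear[OF B hol(1) e hol(2,3)]) (simp_all add: deriv_p)
  show ?thesis
  proof (rule e6_germI[OF U(1,2), of ?\<Psi>])
    show "continuous_on U ?\<Psi>"
      using hom by (simp add: homeomorphism_def)
    show "inj_on ?\<Psi> U"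
      using homeomorphism_apply1[OF hom] by (rule inj_on_inverseI)
    fix z assume "z \<in> U"
    then obtain u v where z: "z = (u, v)" "u \<in> B" "1 - 3 * u * c u * e u ^ 2 - e u ^ 3 * v^2 \<noteq> 0"
      using U_sub by (cases z) auto
    have "0 < Re (1 + d^2 * u)" using z(2) unfolding B_def by blast
    then have "1 + d^2 * u \<noteq> 0" by (metis less_irrefl zero_complex.sel(1))
    then have "fst (?\<Psi> z) ^ 3 + snd (?\<Psi> z) ^ 4 = u^3 + (v^2 + d * u^2)^2"
      using root_shear_cube_plus_quartic z(3) by (simp add: z c_def e_def)
    then show "(case z of (u, v) \<Rightarrow> u^3 + (v^2 + d * u^2)^2) = 0 \<longleftrightarrow> fst (?\<Psi> z) ^ 3 + snd (?\<Psi> z) ^ 4 = 0"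
      by (simp add: z)
  qed (simp add: c_def e_def)
qed

lemma e6_germ_square_plus_cube:
  fixes A B D \<alpha> \<beta> a0 b0 :: complex
  assumes ab: "(\<alpha>, \<beta>) \<noteq> (0, 0)" and Q: "A*\<beta>^2 - D*\<alpha>*\<beta> + B*\<alpha>^2 \<noteq> 0"
  shows "e6_germ (\<lambda>(x, y). (A*(x - a0)^2 + D*(x - a0)*(y - b0) + B*(y - b0)^2)^2
      + (\<alpha>*(x - a0) + \<beta>*(y - b0))^3) (a0, b0)"
proof -
  obtain \<sigma> \<tau> d where split: "\<And>\<xi> \<eta>. A*\<xi>^2 + D*\<xi>*\<eta> + B*\<eta>^2 = (\<sigma>*\<xi> + \<tau>*\<eta>)^2 + d*(\<alpha>*\<xi> + \<beta>*\<eta>)^2"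
    and det: "\<alpha>*\<tau> - \<beta>*\<sigma> \<noteq> 0"
    using binary_quadratic_split_off_line[OF ab Q] by blast
  define T where "T z = (\<alpha>*(fst z - a0) + \<beta>*(snd z - b0), \<sigma>*(fst z - a0) + \<tau>*(snd z - b0))" for z
  have "e6_germ (\<lambda>z. (\<lambda>(u, v). u^3 + (v^2 + d * u^2)^2) (T z)) (a0, b0)"
  proof (rule e6_germ_compose_injective[OF e6_germ_normal_form])
    show "continuous_on UNIV T" unfolding T_def by (intro continuous_intros)
    show "inj T" unfolding T_def[abs_def] by (rule inj_affine_map_complex2[OF det])
  qed (simp add: T_def)
  moreover have "(\<lambda>z. (\<lambda>(u, v). u^3 + (v^2 + d * u^2)^2) (T z)) = (\<lambda>(x, y).
      (A*(x - a0)^2 + D*(x - a0)*(y - b0) + B*(y - b0)^2)^2 + (\<alpha>*(x - a0) + \<beta>*(y - b0))^3)"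
    by (auto simp: T_def split)
  ultimately show ?thesis by simp
qed

section \<open>The quartic at a singular point of the conic\<close>

locale singular_conic_quartic =
  fixes F1 F2 G :: form3 and p1 p2 p3 \<alpha> \<beta> \<gamma> A B C D E Fc :: complex
  assumes F1_eq: "\<And>X Y Z. F1 X Y Z = \<alpha>*X + \<beta>*Y + \<gamma>*Z"
    and L_ne_Linf: "(\<alpha>, \<beta>) \<noteq> (0, 0)"
    and F2_eq: "\<And>X Y Z. F2 X Y Z = A*X^2 + B*Y^2 + C*Z^2 + D*X*Y + E*X*Z + Fc*Y*Z"
    and F2_nonzero: "F2 \<noteq> (\<lambda>_ _ _. 0)"
    and no_L: "\<not> line_component F1 F2"
    and no_Linf: "\<not> line_component (\<lambda>X Y Z. Z) F2"
    and P: "(p1, p2, p3) \<noteq> (0, 0, 0)"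
    and F2_P: "F2 p1 p2 p3 = 0"
    and grad: "2*A*p1 + D*p2 + E*p3 = 0" "2*B*p2 + D*p1 + Fc*p3 = 0" "2*C*p3 + E*p1 + Fc*p2 = 0"
    and G_eq: "\<And>X Y Z. G X Y Z = (F2 X Y Z)^2 + (F1 X Y Z)^3 * Z"
begin

lemma line_component_of_linear_cofactor:
  assumes "\<And>X Y Z. F2 X Y Z = F X Y Z * (a*X + b*Y + c*Z)"
  shows "line_component F F2"
proof -
  have "(a, b, c) \<noteq> (0, 0, 0)"
    using assms F2_nonzero by (auto simp: fun_eq_iff)
  then have "linear_form (\<lambda>X Y Z. a*X + b*Y + c*Z)"
    unfolding linear_form_def by blast
  then show ?thesis
    unfolding line_component_def using assms by blast
qed

lemma proj_e6_on_L:
  assumes F1_P: "F1 p1 p2 p3 = 0" and p3: "p3 \<noteq> 0"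
  shows "proj_e6 G p1 p2 p3"
proof -
  define a0 b0 where "a0 = p1/p3" and "b0 = p2/p3"
  have F2_cone: "F2 X Y Z = A * (X - a0*Z)^2 + D * (X - a0*Z) * (Y - b0*Z) + B * (Y - b0*Z)^2" for X Y Z
    unfolding a0_def b0_def by (rule singular_quadric_affine_cone[OF F2_eq grad p3])
  have p: "p1 = a0 * p3" "p2 = b0 * p3" using p3 by (simp_all add: a0_def b0_def)
  have "p3 * (\<gamma> + (\<alpha>*a0 + \<beta>*b0)) = 0"
    using F1_P unfolding F1_eq p by (simp add: algebra_simps)
  then have \<gamma>: "\<gamma> = - (\<alpha>*a0 + \<beta>*b0)"
    using p3 by (metis add_eq_0_iff2 mult_eq_0_iff)
  have F1_cone: "F1 X Y Z = \<alpha> * (X - a0*Z) + \<beta> * (Y - b0*Z)" for X Y Z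
    unfolding F1_eq \<gamma> by (simp add: algebra_simps)
  have "A*\<beta>^2 - D*\<alpha>*\<beta> + B*\<alpha>^2 \<noteq> 0"
  proof
    assume "A*\<beta>^2 - D*\<alpha>*\<beta> + B*\<alpha>^2 = 0"
    then obtain \<sigma> \<tau> where factor:
      "\<And>\<xi> \<eta>. A*\<xi>^2 + D*\<xi>*\<eta> + B*\<eta>^2 = (\<alpha>*\<xi> + \<beta>*\<eta>) * (\<sigma>*\<xi> + \<tau>*\<eta>)"
      using binary_quadratic_factor_of_zero[OF L_ne_Linf] by blast
    have "F2 X Y Z = F1 X Y Z * (\<sigma>*X + \<tau>*Y + (- \<sigma>*a0 - \<tau>*b0)*Z)" for X Y Z
    proof -
      have "F2 X Y Z = (\<alpha>*(X - a0*Z) + \<beta>*(Y - b0*Z)) * (\<sigma>*(X - a0*Z) + \<tau>*(Y - b0*Z))"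
        unfolding F2_cone by (rule factor)
      then show ?thesis unfolding F1_cone by (simp add: algebra_simps)
    qed
    then show False
      using line_component_of_linear_cofactor[of F1 \<sigma> \<tau> "- \<sigma>*a0 - \<tau>*b0"] no_L by blast
  qed
  then have "e6_germ (\<lambda>(x, y). (A*(x - a0)^2 + D*(x - a0)*(y - b0) + B*(y - b0)^2)^2
      + (\<alpha>*(x - a0) + \<beta>*(y - b0))^3) (a0, b0)"
    by (rule e6_germ_square_plus_cube[OF L_ne_Linf])
  then show ?thesis
    unfolding proj_e6_def a0_def[symmetric] b0_def[symmetric]
    by (simp add: G_eq F2_cone F1_cone)
qed

lemma cone_at_infinity:
  assumes p3: "p3 = 0"
  obtains k1 k2 where "k1 \<noteq> 0"
    "\<And>X Y Z. F2 X Y Z = k1 * (p2*X - p1*Y)^2 + k2 * (p2*X - p1*Y) * Z + C * Z^2"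
proof -
  have P12: "(p1, p2) \<noteq> (0, 0)" using P p3 by auto
  obtain k1 k2 where cone: "\<And>X Y Z. F2 X Y Z = k1 * (p2*X - p1*Y)^2 + k2 * (p2*X - p1*Y) * Z + C * Z^2"
    using singular_quadric_cone_at_infinity[OF F2_eq _ _ _ P12] grad p3 by (auto simp: add.commute)
  moreover have "k1 \<noteq> 0"
  proof
    assume "k1 = 0"
    then have "F2 X Y Z = Z * ((k2*p2)*X + (- k2*p1)*Y + C*Z)" for X Y Z
      by (simp add: cone algebra_simps power2_eq_square)
    then show False
      using line_component_of_linear_cofactor[of "\<lambda>X Y Z. Z" "k2*p2" "- k2*p1" C] no_Linf by blast
  qed
  ultimately show ?thesis using that by blast
qed

lemma smooth_tangent_off_L:
  assumes p3: "p3 = 0" and F1_P: "F1 p1 p2 p3 \<noteq> 0"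
  shows "smooth_at G p1 p2 p3" "tangent_to_Linf G p1 p2 p3"
proof -
  have G: "G = (\<lambda>X Y Z. (A*X^2 + B*Y^2 + C*Z^2 + D*X*Y + E*X*Z + Fc*Y*Z)^2 + (\<alpha>*X + \<beta>*Y + \<gamma>*Z)^3 * Z)"
    by (simp add: fun_eq_iff G_eq F1_eq F2_eq)
  have F2_P': "A*p1^2 + B*p2^2 + D*p1*p2 = 0" using F2_P p3 by (simp add: F2_eq)
  have "((\<lambda>x. G x p2 p3) has_field_derivative 0) (at p1)"
    "((\<lambda>y. G p1 y p3) has_field_derivative 0) (at p2)"
    "((\<lambda>z. G p1 p2 z) has_field_derivative (\<alpha>*p1 + \<beta>*p2)^3) (at p3)"
    unfolding G p3 using F2_P' by (auto intro!: derivative_eq_intros)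
  moreover have "\<alpha>*p1 + \<beta>*p2 \<noteq> 0" using F1_P p3 by (simp add: F1_eq)
  moreover have "G p1 p2 p3 = 0" using F2_P p3 by (simp add: G_eq)
  ultimately show "smooth_at G p1 p2 p3" "tangent_to_Linf G p1 p2 p3"
    by (simp_all add: smooth_at_def zero_grad_def tangent_to_Linf_def DERIV_imp_deriv)
qed

lemma line_int_mult_Linf:
  assumes p3: "p3 = 0" and Q: "\<forall>c. (q1, q2, 0) \<noteq> (c * p1, c * p2, c * p3)"
  shows "line_int_mult G (p1, p2, p3) (q1, q2, 0) = 4"
proof -
  obtain k1 k2 where k1: "k1 \<noteq> 0"
    and cone: "\<And>X Y Z. F2 X Y Z = k1 * (p2*X - p1*Y)^2 + k2 * (p2*X - p1*Y) * Z + C * Z^2"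
    using cone_at_infinity[OF p3] by blast
  define \<delta> where "\<delta> = p2*q1 - p1*q2"
  have "\<delta> \<noteq> 0"
  proof
    assume "\<delta> = 0"
    then have "q2 * p1 + (- q1) * p2 = 0" by (simp add: \<delta>_def algebra_simps)
    moreover have "(p1, p2) \<noteq> (0, 0)" using P p3 by auto
    ultimately obtain c where "q2 = c * p2" "- q1 = - c * p1"
      by (rule linear_relation_multiple)
    then have "(q1, q2, 0) = (c * p1, c * p2, c * p3)" using p3 by simp
    then show False using Q by blast
  qed
  have G_line: "G (p1 + t*q1) (p2 + t*q2) (p3 + t*0) = (k1^2 * \<delta>^4) * (t - 0) powi 4" for t
  proof -
    have "p2*(p1 + t*q1) - p1*(p2 + t*q2) = t * \<delta>" by (simp add: \<delta>_def algebra_simps)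
    then show ?thesis by (simp add: G_eq cone p3 power_mult_distrib power2_eq_square power4_eq_xxxx)
  qed
  have "zorder (\<lambda>t. G (p1 + t*q1) (p2 + t*q2) (p3 + t*0)) 0 = 4"
    by (rule zorder_eqI[of UNIV 0 "\<lambda>_. k1^2 * \<delta>^4"]) (use k1 \<open>\<delta> \<noteq> 0\<close> G_line in auto)
  then show ?thesis by (simp add: line_int_mult_def)
qed

lemma four_lines_on_L:
  assumes p3: "p3 = 0" and F1_P: "F1 p1 p2 p3 = 0"
  shows "\<exists>l1 l2 l3 l4. linear_form l1 \<and> linear_form l2 \<and> linear_form l3 \<and> linear_form l4 \<and>
    l1 p1 p2 p3 = 0 \<and> l2 p1 p2 p3 = 0 \<and> l3 p1 p2 p3 = 0 \<and> l4 p1 p2 p3 = 0 \<and>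
    (\<forall>X Y Z. G X Y Z = l1 X Y Z * l2 X Y Z * l3 X Y Z * l4 X Y Z)"
proof -
  have P12: "(p1, p2) \<noteq> (0, 0)" using P p3 by auto
  obtain k1 k2 where k1: "k1 \<noteq> 0"
    and cone: "\<And>X Y Z. F2 X Y Z = k1 * (p2*X - p1*Y)^2 + k2 * (p2*X - p1*Y) * Z + C * Z^2"
    using cone_at_infinity[OF p3] by blast
  have "\<alpha>*p1 + \<beta>*p2 = 0" using F1_P p3 by (simp add: F1_eq)
  then obtain \<mu> where \<mu>: "\<alpha> = \<mu>*p2" "\<beta> = - \<mu>*p1"
    using linear_relation_multiple[OF _ P12] by blast
  obtain r1 r2 r3 r4 where roots: "\<And>u v. k1^2*u^4 + (2*k1*k2 + \<mu>^3)*u^3 * v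
      + (k2^2 + 2*k1*C + 3*\<mu>^2*\<gamma>)*u^2 * v^2 + (2*k2*C + 3*\<mu>*\<gamma>^2)*u * v^3 + (C^2 + \<gamma>^3) * v^4
      = k1^2 * (u - r1 * v) * (u - r2 * v) * (u - r3 * v) * (u - r4 * v)"
    using binary_quartic_factor[where a = "k1^2" and b = "2*k1*k2 + \<mu>^3"
        and c = "k2^2 + 2*k1*C + 3*\<mu>^2*\<gamma>" and d = "2*k2*C + 3*\<mu>*\<gamma>^2" and e = "C^2 + \<gamma>^3"] k1
    by (metis zero_eq_power2)
  define l where "l c r X Y Z = c * (p2*X - p1*Y - r*Z)" for c r X Y Z
  have "linear_form (l c r)" if "c \<noteq> 0" for c r
    unfolding linear_form_def l_def using that P12
    by (intro exI[of _ "c*p2"] exI[of _ "-c*p1"] exI[of _ "-c*r"]) (auto simp: algebra_simps)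
  moreover have "l c r p1 p2 p3 = 0" for c r by (simp add: l_def p3 algebra_simps)
  moreover have "G X Y Z = l (k1^2) r1 X Y Z * l 1 r2 X Y Z * l 1 r3 X Y Z * l 1 r4 X Y Z" for X Y Z
  proof -
    define u where "u = p2*X - p1*Y"
    have "F1 X Y Z = \<mu>*u + \<gamma>*Z" by (simp add: F1_eq \<mu> u_def algebra_simps)
    then have "G X Y Z = (k1 * u^2 + k2 * u * Z + C * Z^2)^2 + (\<mu>*u + \<gamma>*Z)^3 * Z"
      by (simp add: G_eq cone u_def)
    also have "\<dots> = k1^2*u^4 + (2*k1*k2 + \<mu>^3)*u^3 * Z + (k2^2 + 2*k1*C + 3*\<mu>^2*\<gamma>)*u^2 * Z^2
        + (2*k2*C + 3*\<mu>*\<gamma>^2)*u * Z^3 + (C^2 + \<gamma>^3) * Z^4"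
      by algebra
    also have "\<dots> = k1^2 * (u - r1 * Z) * (u - r2 * Z) * (u - r3 * Z) * (u - r4 * Z)"
      by (rule roots)
    finally show ?thesis by (simp add: l_def u_def mult.assoc)
  qed
  ultimately show ?thesis
    using k1 by (intro exI[of _ "l (k1^2) r1"] exI[of _ "l 1 r2"] exI[of _ "l 1 r3"] exI[of _ "l 1 r4"]) simp
qed

end

theorem lemma2:
  fixes F1 F2 :: form3 and p1 p2 p3 :: complex
  assumes F1: "linear_form F1"
    and F2: "quadratic_form F2"
    and L_ne_Linf: "\<not> (\<exists>c. \<forall>X Y Z. F1 X Y Z = c * Z)"
    and no_L: "\<not> line_component F1 F2"
    and no_Linf: "\<not> line_component (\<lambda>X Y Z. Z) F2"
    and P: "(p1, p2, p3) \<noteq> (0, 0, 0)"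
    and sing: "singular_at F2 p1 p2 p3"
  defines "G \<equiv> (\<lambda>X Y Z. (F2 X Y Z)^2 + (F1 X Y Z)^3 * Z)"
  shows
    "(F1 p1 p2 p3 = 0 \<and> p3 \<noteq> 0 \<longrightarrow> proj_e6 G p1 p2 p3)
   \<and> (p3 = 0 \<and> F1 p1 p2 p3 \<noteq> 0 \<longrightarrow>
        smooth_at G p1 p2 p3 \<and> tangent_to_Linf G p1 p2 p3 \<and>
        (\<forall>q1 q2. (\<forall>c. (q1, q2, 0) \<noteq> (c * p1, c * p2, c * p3)) \<longrightarrow>
           line_int_mult G (p1, p2, p3) (q1, q2, 0) = 4))
   \<and> (F1 p1 p2 p3 = 0 \<and> p3 = 0 \<longrightarrow>
        (\<exists>l1 l2 l3 l4. linear_form l1 \<and> linear_form l2 \<and> linear_form l3 \<and> linear_form l4 \<and>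
           l1 p1 p2 p3 = 0 \<and> l2 p1 p2 p3 = 0 \<and> l3 p1 p2 p3 = 0 \<and> l4 p1 p2 p3 = 0 \<and>
           (\<forall>X Y Z. G X Y Z = l1 X Y Z * l2 X Y Z * l3 X Y Z * l4 X Y Z)))"
proof -
  obtain \<alpha> \<beta> \<gamma> where F1_eq: "\<And>X Y Z. F1 X Y Z = \<alpha>*X + \<beta>*Y + \<gamma>*Z"
    using F1 unfolding linear_form_def by blast
  obtain A B C D E Fc where F2_eq: "\<And>X Y Z. F2 X Y Z = A*X^2 + B*Y^2 + C*Z^2 + D*X*Y + E*X*Z + Fc*Y*Z"
    and "F2 \<noteq> (\<lambda>_ _ _. 0)"
    using F2 unfolding quadratic_form_def by blast
  have "(\<alpha>, \<beta>) \<noteq> (0, 0)"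
    using L_ne_Linf F1_eq by auto
  moreover have "F2 p1 p2 p3 = 0" "zero_grad F2 p1 p2 p3"
    using sing by (simp_all add: singular_at_def)
  ultimately interpret singular_conic_quartic F1 F2 G p1 p2 p3 \<alpha> \<beta> \<gamma> A B C D E Fc
    using F1_eq F2_eq \<open>F2 \<noteq> _\<close> no_L no_Linf P
    by unfold_locales (simp_all add: G_def zero_grad_quadratic_iff[OF F2_eq])
  show ?thesis
    using proj_e6_on_L smooth_tangent_off_L line_int_mult_Linf four_lines_on_L by blast
qed

end
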